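(* Let $d$ be a degree sequence with complementary sequence $\overline d$. Then $\Delta_{m(\overline d)}(\overline d)=\Delta_{m(d)}(d)$; that is, the last principal Erdős–Gallai differences of $d$ and $\overline d$ coincide.
   Context: Degree sequences $d=(d_1,\dots,d_n)$ (of finite simple graphs, terms may be $0$) are listed in nonincreasing order; $\overline d=(n-1-d_n,\dots,n-1-d_1)$ is the complementary sequence. $m(d)=\max\{i : d_i\ge i-1\}$. For integers $k\ge 0$, $\Delta_k(d)=k(k-1)+\sum_{i>k}\min\{k,d_i\}-\sum_{i\le k}d_i$. *)

theory Defs
  imports Main
begin

text \<open>A sequence d = (d_1,...,d_n) is represented by a list of naturals; d_i is d ! (i-1).
  A graph on vertex set {0..<n} is a symmetric irreflexive edge set E.\<close>

definition graphic :: "nat list \<Rightarrow> bool" where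
  "graphic d \<longleftrightarrow> (\<exists>E :: (nat \<times> nat) set.
      E \<subseteq> {..<length d} \<times> {..<length d} \<and>
      (\<forall>i j. (i, j) \<in> E \<longrightarrow> (j, i) \<in> E) \<and>
      (\<forall>i. (i, i) \<notin> E) \<and>
      (\<forall>i < length d. card {j. (i, j) \<in> E} = d ! i))"

definition degree_sequence :: "nat list \<Rightarrow> bool" where
  "degree_sequence d \<longleftrightarrow> graphic d \<and> sorted_wrt (\<ge>) d"

definition compl_seq :: "nat list \<Rightarrow> nat list" where
  "compl_seq d = rev (map (\<lambda>x. length d - 1 - x) d)"

definition dseq :: "nat list \<Rightarrow> nat \<Rightarrow> nat" where
  "dseq d i = d ! (i - 1)"

definition mEG :: "nat list \<Rightarrow> nat" where
  "mEG d = Max ({0} \<union> {i \<in> {1..length d}. int (dseq d i) \<ge> int i - 1})"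

definition DeltaEG :: "nat \<Rightarrow> nat list \<Rightarrow> int" where
  "DeltaEG k d = int k * (int k - 1)
     + (\<Sum>i \<in> {k<..length d}. int (min k (dseq d i)))
     - (\<Sum>i \<in> {1..min k (length d)}. int (dseq d i))"

end

(* Let h = max {i : d_i >= i} be the Durfee number of d. For k = h the entries d_1..d_k are
   at least k - 1 and the later ones at most k, so the min in Delta_k disappears; reflecting
   indices i |-> n + 1 - i shows that the complement then splits the same way at n - h, which
   is m of the complement, and a direct computation gives Delta_{n-h}(compl d) = Delta_h(d).
   Finally m(d) is h or h + 1, and in the latter case d_{h+1} = h, which leaves Delta unchanged. *)
theory Submission
  imports Defs
begin

lemma dseq_in_set: "1 \<le> i \<Longrightarrow> i \<le> length d \<Longrightarrow> dseq d i \<in> set d"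
  unfolding dseq_def by simp

lemma dseq_antimono:
  assumes "sorted_wrt (\<ge>) d" "1 \<le> i" "i \<le> j" "j \<le> length d"
  shows "dseq d j \<le> dseq d i"
  using assms unfolding dseq_def sorted_wrt_iff_nth_less
  by (cases "i = j") auto

lemma length_compl_seq [simp]: "length (compl_seq d) = length d"
  by (simp add: compl_seq_def)

lemma dseq_compl_seq:
  assumes "1 \<le> i" "i \<le> length d"
  shows "dseq (compl_seq d) i = length d - 1 - dseq d (length d + 1 - i)"
  using assms by (simp add: dseq_def compl_seq_def rev_nth Suc_diff_le)

lemma sorted_compl_seq: "sorted_wrt (\<ge>) d \<Longrightarrow> sorted_wrt (\<ge>) (compl_seq d)"
  unfolding compl_seq_def sorted_wrt_rev sorted_wrt_map
  by (auto elim!: sorted_wrt_mono_rel[rotated])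

lemma degree_sequence_lt_length:
  assumes "degree_sequence d" "x \<in> set d"
  shows "x < length d"
proof -
  obtain E where E: "E \<subseteq> {..<length d} \<times> {..<length d}" "\<forall>i. (i, i) \<notin> E"
      "\<forall>i < length d. card {j. (i, j) \<in> E} = d ! i"
    using assms(1) unfolding degree_sequence_def graphic_def by blast
  obtain i where i: "i < length d" "x = d ! i" using assms(2) by (auto simp: in_set_conv_nth)
  have "{j. (i, j) \<in> E} \<subseteq> {..<length d} - {i}" using E by auto
  then have "card {j. (i, j) \<in> E} \<le> card ({..<length d} - {i})" by (intro card_mono) auto
  then show ?thesis using E(3) i by auto
qed

lemma mEG_eqI:
  assumes srt: "sorted_wrt (\<ge>) d" and "m \<le> length d"
    and "0 < m \<Longrightarrow> m \<le> dseq d m + 1"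
    and next_small: "m < length d \<Longrightarrow> dseq d (m + 1) < m"
  shows "mEG d = m"
  unfolding mEG_def
proof (rule Max_eqI)
  show "m \<in> {0} \<union> {i \<in> {1..length d}. int i - 1 \<le> int (dseq d i)}"
    using assms(2,3) by auto
  fix i assume "i \<in> {0} \<union> {i \<in> {1..length d}. int i - 1 \<le> int (dseq d i)}"
  then have i: "i = 0 \<or> (1 \<le> i \<and> i \<le> length d \<and> i \<le> dseq d i + 1)" by auto
  show "i \<le> m"
  proof (rule ccontr)
    assume "\<not> i \<le> m"
    then show False
      using i dseq_antimono[OF srt, of "m + 1" i] next_small by fastforce
  qed
qed simp

definition durfee :: "nat list \<Rightarrow> nat" where
  "durfee d = Max ({0} \<union> {i \<in> {1..length d}. i \<le> dseq d i})"

lemma durfee_le_length: "durfee d \<le> length d"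
  unfolding durfee_def by (rule Max.boundedI) auto

lemma durfee_le_dseq_durfee: "0 < durfee d \<Longrightarrow> durfee d \<le> dseq d (durfee d)"
  using Max_in[of "{0} \<union> {i \<in> {1..length d}. i \<le> dseq d i}"]
  unfolding durfee_def by auto

lemma dseq_Suc_durfee_le:
  assumes "durfee d < length d"
  shows "dseq d (durfee d + 1) \<le> durfee d"
proof (rule ccontr)
  assume "\<not> ?thesis"
  then have "durfee d + 1 \<in> {0} \<union> {i \<in> {1..length d}. i \<le> dseq d i}"
    using assms by auto
  then have "durfee d + 1 \<le> durfee d" unfolding durfee_def by (intro Max_ge) auto
  then show False by simp
qed

lemma durfee_le_dseq:
  assumes "sorted_wrt (\<ge>) d" "1 \<le> j" "j \<le> durfee d"
  shows "durfee d \<le> dseq d j"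
  using durfee_le_dseq_durfee[of d] dseq_antimono[OF assms(1,2,3)] durfee_le_length[of d] assms(2,3)
  by simp

lemma dseq_le_durfee:
  assumes "sorted_wrt (\<ge>) d" "durfee d < j" "j \<le> length d"
  shows "dseq d j \<le> durfee d"
  using dseq_Suc_durfee_le[of d] dseq_antimono[OF assms(1), of "durfee d + 1" j] assms(2,3)
  by simp

lemma mEG_eq_durfee:
  assumes "sorted_wrt (\<ge>) d"
  shows "mEG d = (if durfee d < length d \<and> dseq d (durfee d + 1) = durfee d
    then durfee d + 1 else durfee d)"
  using durfee_le_length[of d] durfee_le_dseq_durfee[of d] dseq_Suc_durfee_le[of d]
    dseq_le_durfee[OF assms, of "durfee d + 2"]
  by (intro mEG_eqI[OF assms]) auto

lemma mEG_compl_seq: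
  assumes srt: "sorted_wrt (\<ge>) d" and bnd: "\<forall>x \<in> set d. x < length d"
  shows "mEG (compl_seq d) = length d - durfee d"
proof (rule mEG_eqI)
  let ?n = "length d" and ?h = "durfee d"
  show "sorted_wrt (\<ge>) (compl_seq d)" using sorted_compl_seq[OF srt] .
  show "?n - ?h \<le> length (compl_seq d)" by simp
  show "?n - ?h \<le> dseq (compl_seq d) (?n - ?h) + 1" if "0 < ?n - ?h"
    using that dseq_Suc_durfee_le[of d] by (simp add: dseq_compl_seq)
  show "dseq (compl_seq d) (?n - ?h + 1) < ?n - ?h" if "?n - ?h < length (compl_seq d)"
  proof -
    have "0 < ?h" "?h \<le> ?n" using that durfee_le_length[of d] by auto
    then have "?h \<le> dseq d ?h" "dseq d ?h < ?n"
      using durfee_le_dseq_durfee[of d] bnd dseq_in_set[of ?h d] by auto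
    with \<open>0 < ?h\<close> \<open>?h \<le> ?n\<close> show ?thesis by (simp add: dseq_compl_seq)
  qed
qed

lemma DeltaEG_eq_if_tail_le:
  assumes "k \<le> length d" "\<And>i. k < i \<Longrightarrow> i \<le> length d \<Longrightarrow> dseq d i \<le> k"
  shows "DeltaEG k d = int k * (int k - 1) + (\<Sum>i \<in> {k<..length d}. int (dseq d i))
    - (\<Sum>i \<in> {1..k}. int (dseq d i))"
proof -
  have "(\<Sum>i \<in> {k<..length d}. int (min k (dseq d i))) = (\<Sum>i \<in> {k<..length d}. int (dseq d i))"
    using assms(2) by (intro sum.cong) auto
  then show ?thesis unfolding DeltaEG_def using assms(1) by (simp add: min_absorb1)
qed

lemma DeltaEG_Suc_eq:
  assumes srt: "sorted_wrt (\<ge>) d" and "k < length d" "dseq d (k + 1) = k"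
  shows "DeltaEG (k + 1) d = DeltaEG k d"
proof -
  let ?n = "length d" and ?f = "\<lambda>i. int (dseq d i)"
  have tail: "dseq d i \<le> k" if "k < i" "i \<le> ?n" for i
    using dseq_antimono[OF srt, of "k + 1" i] that assms(3) by simp
  have "{k<..?n} = insert (k + 1) {k + 1<..?n}" "{1..k + 1} = insert (k + 1) {1..k}"
    using assms(2) by auto
  then have "(\<Sum>i \<in> {k<..?n}. ?f i) = int k + (\<Sum>i \<in> {k + 1<..?n}. ?f i)"
    "(\<Sum>i \<in> {1..k + 1}. ?f i) = int k + (\<Sum>i \<in> {1..k}. ?f i)"
    using assms(3) by simp_all
  moreover have "DeltaEG (k + 1) d = int (k + 1) * (int (k + 1) - 1)
      + (\<Sum>i \<in> {k + 1<..?n}. ?f i) - (\<Sum>i \<in> {1..k + 1}. ?f i)"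
    using assms(2) tail[THEN le_SucI] by (intro DeltaEG_eq_if_tail_le) auto
  moreover have "DeltaEG k d = int k * (int k - 1) + (\<Sum>i \<in> {k<..?n}. ?f i)
      - (\<Sum>i \<in> {1..k}. ?f i)"
    using assms(2) tail by (intro DeltaEG_eq_if_tail_le) auto
  ultimately show ?thesis by (simp add: algebra_simps)
qed

lemma DeltaEG_mEG_eq_durfee:
  assumes "sorted_wrt (\<ge>) d"
  shows "DeltaEG (mEG d) d = DeltaEG (durfee d) d"
  using mEG_eq_durfee[OF assms] DeltaEG_Suc_eq[OF assms, of "durfee d"] by auto

lemma sum_reflect:
  fixes g :: "nat \<Rightarrow> 'a::comm_monoid_add"
  assumes "b \<le> n"
  shows "(\<Sum>i \<in> {a<..b}. g (n + 1 - i)) = (\<Sum>j \<in> {n + 1 - b..n - a}. g j)"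
  by (rule sum.reindex_bij_witness[of _ "\<lambda>j. n + 1 - j" "\<lambda>j. n + 1 - j"]) (use assms in auto)

lemma DeltaEG_compl_seq:
  assumes bnd: "\<forall>x \<in> set d. x < length d" and "k \<le> length d"
    and head: "\<And>j. 1 \<le> j \<Longrightarrow> j \<le> k \<Longrightarrow> k - 1 \<le> dseq d j"
    and tail: "\<And>j. k < j \<Longrightarrow> j \<le> length d \<Longrightarrow> dseq d j \<le> k"
  shows "DeltaEG (length d - k) (compl_seq d) = DeltaEG k d"
proof -
  let ?n = "length d" and ?c = "compl_seq d"
  define f where "f j = int (dseq d j)" for j
  define g where "g j = int ?n - 1 - f j" for j
  have c_eq: "int (dseq ?c i) = g (?n + 1 - i)" if "1 \<le> i" "i \<le> ?n" for i
  proof -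
    have "dseq d (?n + 1 - i) < ?n" using that bnd dseq_in_set[of "?n + 1 - i" d] by auto
    then show ?thesis using that by (simp add: dseq_compl_seq f_def g_def of_nat_diff)
  qed
  have c_tail: "dseq ?c i \<le> ?n - k" if "?n - k < i" "i \<le> ?n" for i
  proof -
    have "k - 1 \<le> dseq d (?n + 1 - i)" using that by (intro head) auto
    then show ?thesis using that by (simp add: dseq_compl_seq)
  qed
  have "DeltaEG (?n - k) ?c = int (?n - k) * (int (?n - k) - 1)
      + (\<Sum>i \<in> {?n - k<..?n}. int (dseq ?c i)) - (\<Sum>i \<in> {1..?n - k}. int (dseq ?c i))"
    using c_tail by (intro DeltaEG_eq_if_tail_le[of _ ?c, unfolded length_compl_seq]) auto
  also have "(\<Sum>i \<in> {?n - k<..?n}. int (dseq ?c i)) = (\<Sum>i \<in> {?n - k<..?n}. g (?n + 1 - i))"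
    by (intro sum.cong) (auto simp: c_eq)
  also have "\<dots> = (\<Sum>j \<in> {1..k}. g j)"
    using assms(2) sum_reflect[of ?n ?n g "?n - k"] by simp
  also have "(\<Sum>i \<in> {1..?n - k}. int (dseq ?c i)) = (\<Sum>i \<in> {0<..?n - k}. g (?n + 1 - i))"
    by (intro sum.cong) (auto simp: c_eq)
  also have "\<dots> = (\<Sum>j \<in> {k<..?n}. g j)"
    using assms(2) sum_reflect[of "?n - k" ?n g 0]
    by (simp add: Suc_diff_le atLeastSucAtMost_greaterThanAtMost)
  finally have "DeltaEG (?n - k) ?c = int (?n - k) * (int (?n - k) - 1)
      + (int k * (int ?n - 1) - (\<Sum>j \<in> {1..k}. f j))
      - (int (?n - k) * (int ?n - 1) - (\<Sum>j \<in> {k<..?n}. f j))"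
    using assms(2) by (simp add: g_def sum_subtractf)
  also have "\<dots> = int k * (int k - 1) + (\<Sum>j \<in> {k<..?n}. f j) - (\<Sum>j \<in> {1..k}. f j)"
    using assms(2) by (simp add: of_nat_diff algebra_simps)
  also have "\<dots> = DeltaEG k d"
    unfolding f_def using assms(2) tail by (intro DeltaEG_eq_if_tail_le[symmetric]) auto
  finally show ?thesis .
qed

theorem corollary7:
  assumes "degree_sequence d"
  shows "DeltaEG (mEG (compl_seq d)) (compl_seq d) = DeltaEG (mEG d) d"
proof -
  have srt: "sorted_wrt (\<ge>) d" and bnd: "\<forall>x \<in> set d. x < length d"
    using assms degree_sequence_lt_length by (auto simp: degree_sequence_def)
  have "DeltaEG (mEG (compl_seq d)) (compl_seq d) = DeltaEG (length d - durfee d) (compl_seq d)"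
    by (simp add: mEG_compl_seq[OF srt bnd])
  also have "\<dots> = DeltaEG (durfee d) d"
    using durfee_le_length durfee_le_dseq[OF srt] dseq_le_durfee[OF srt]
    by (intro DeltaEG_compl_seq[OF bnd]) (auto intro: order.trans[OF diff_le_self])
  also have "\<dots> = DeltaEG (mEG d) d"
    by (simp add: DeltaEG_mEG_eq_durfee[OF srt])
  finally show ?thesis .
qed

end
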